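(* Let $\mathbf{L}\in\mathbb{R}^{n\times n}$ be symmetric and $\mathbf{V}\in\mathbb{R}^{n\times p}$ ($0\le p\le n$) of full column rank, such that $\widetilde{\mathbf{L}}=(\mathbf{I}-\mathbf{Q}\mathbf{Q}^\top)\mathbf{L}(\mathbf{I}-\mathbf{Q}\mathbf{Q}^\top)$ is positive semi-definite, where $\mathbf{Q}\in\mathbb{R}^{n\times p}$ is an orthonormal basis of the column span of $\mathbf{V}$. Let $\sigma^2>0$ and, for $\varepsilon>0$, let $$\mathbf{M}_\varepsilon=(\mathbf{L}+\varepsilon^{-1}\mathbf{V}\mathbf{V}^\top)(\mathbf{L}+\sigma^2\mathbf{I}+\varepsilon^{-1}\mathbf{V}\mathbf{V}^\top)^{-1}.$$ Then as $\varepsilon\to0$, $$\mathbf{M}_\varepsilon=\mathbf{Q}\mathbf{Q}^\top+\widetilde{\mathbf{U}}\widetilde{\boldsymbol\Lambda}(\widetilde{\boldsymbol\Lambda}+\sigma^2\mathbf{I})^{-1}\widetilde{\mathbf{U}}^\top+O(\varepsilon)=\mathbf{Q}\mathbf{Q}^\top+\widetilde{\mathbf{L}}(\widetilde{\mathbf{L}}+\sigma^2\mathbf{I})^{-1}+O(\varepsilon),$$ where $\widetilde{\mathbf{L}}=\widetilde{\mathbf{U}}\widetilde{\boldsymbol\Lambda}\widetilde{\mathbf{U}}^\top$ is the truncated spectral decomposition of $\widetilde{\mathbf{L}}$ ($\widetilde{\boldsymbol\Lambda}$ the diagonal matrix of its nonzero eigenvalues, $\widetilde{\mathbf{U}}$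 the corresponding orthonormal eigenvectors).
   Context: $\mathbf{M}_\varepsilon$ is the smoother matrix of GP regression with covariance matrix $\mathbf{L}+\varepsilon^{-1}\mathbf{V}\mathbf{V}^\top$ and noise variance $\sigma^2$. *)

theory Defs
  imports "Jordan_Normal_Form.Gauss_Jordan_Elimination" "HOL-Library.Landau_Symbols"
begin

text \<open>Matrix inverse (for singular/non-square matrices a junk value, the zero matrix).\<close>
definition minv :: "real mat \<Rightarrow> real mat" where
  "minv A = (case mat_inverse A of Some B \<Rightarrow> B | None \<Rightarrow> 0\<^sub>m (dim_row A) (dim_col A))"

definition colspace :: "real mat \<Rightarrow> real vec set" where
  "colspace A = {A *\<^sub>v x | x. x \<in> carrier_vec (dim_col A)}"

definition full_col_rank :: "real mat \<Rightarrow> bool" where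
  "full_col_rank A = (\<forall>x \<in> carrier_vec (dim_col A). A *\<^sub>v x = 0\<^sub>v (dim_row A) \<longrightarrow> x = 0\<^sub>v (dim_col A))"

definition psd_mat :: "nat \<Rightarrow> real mat \<Rightarrow> bool" where
  "psd_mat n A = (A \<in> carrier_mat n n \<and> A\<^sup>T = A \<and> (\<forall>x \<in> carrier_vec n. 0 \<le> x \<bullet> (A *\<^sub>v x)))"

definition Ltilde :: "nat \<Rightarrow> real mat \<Rightarrow> real mat \<Rightarrow> real mat" where
  "Ltilde n L Q = (1\<^sub>m n - Q * Q\<^sup>T) * L * (1\<^sub>m n - Q * Q\<^sup>T)"

definition smoother :: "nat \<Rightarrow> real mat \<Rightarrow> real mat \<Rightarrow> real \<Rightarrow> real \<Rightarrow> real mat" where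
  "smoother n L V s2 eps =
     (L + (1 / eps) \<cdot>\<^sub>m (V * V\<^sup>T)) * minv (L + s2 \<cdot>\<^sub>m 1\<^sub>m n + (1 / eps) \<cdot>\<^sub>m (V * V\<^sup>T))"

definition trunc_spectral :: "nat \<Rightarrow> nat \<Rightarrow> real mat \<Rightarrow> real mat \<Rightarrow> real mat \<Rightarrow> bool" where
  "trunc_spectral n r A U Lam = (U \<in> carrier_mat n r \<and> Lam \<in> carrier_mat r r \<and>
     U\<^sup>T * U = 1\<^sub>m r \<and> diagonal_mat Lam \<and> (\<forall>i<r. Lam $$ (i,i) \<noteq> 0) \<and> A = U * Lam * U\<^sup>T)"

definition bigO_eps :: "nat \<Rightarrow> (real \<Rightarrow> real mat) \<Rightarrow> bool" where
  "bigO_eps n F = (\<forall>i<n. \<forall>j<n. (\<lambda>eps. F eps $$ (i,j)) \<in> O[at_right 0](\<lambda>eps. eps))"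

end

theory Submission
  imports Defs "HOL-Analysis.L2_Norm" "Jordan_Normal_Form.Determinant"
begin

text \<open>
  Write \<open>A\<^sub>\<epsilon> = L + \<sigma>\<^sup>2 I + \<epsilon>\<^sup>-\<^sup>1 V V\<^sup>T\<close>, so that \<open>M\<^sub>\<epsilon> = I - \<sigma>\<^sup>2 A\<^sub>\<epsilon>\<^sup>-\<^sup>1\<close>, and
  \<open>K = (Ltilde + \<sigma>\<^sup>2 I)\<^sup>-\<^sup>1 - \<sigma>\<^sup>-\<^sup>2 Q Q\<^sup>T\<close>, so that the claimed limit is \<open>I - \<sigma>\<^sup>2 K\<close>.
  Since \<open>V\<^sup>T K = 0\<close>, the residual \<open>I - A\<^sub>\<epsilon> K = I - (L + \<sigma>\<^sup>2 I) K\<close> does not depend on \<open>\<epsilon>\<close>,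
  and its columns lie in the span of \<open>Q\<close>. Hence it suffices to show that \<open>A\<^sub>\<epsilon> d = Q u\<close>
  forces \<open>|d| = O(\<epsilon>) |u|\<close>.

  Split \<open>d = Q a + b\<close> with \<open>b \<bottom> span Q = span V\<close>. Pairing the equation with \<open>b\<close> kills the
  \<open>\<epsilon>\<^sup>-\<^sup>1\<close> term, and positivity of \<open>Ltilde\<close> on the complement gives \<open>\<sigma>\<^sup>2 |b| \<le> |L Q| |a|\<close>.
  Pairing it with \<open>d\<close> gives \<open>\<epsilon>\<^sup>-\<^sup>1 |V\<^sup>T d|\<^sup>2 \<le> |a| |u| + k |a|\<^sup>2\<close> for a constant \<open>k\<close>, while \<open>|a| \<le> c |V\<^sup>T d|\<close>
  because \<open>Q = V S\<close>; for small \<open>\<epsilon>\<close> the quadratic term is absorbed and \<open>|a| = O(\<epsilon>) |u|\<close>.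
  The spectral form of the limit follows by cancelling \<open>Ltilde + \<sigma>\<^sup>2 I\<close>.
\<close>

definition vnorm :: "real vec \<Rightarrow> real" where
  "vnorm v = L2_set (\<lambda>i. v $ i) {..<dim_vec v}"

definition frobenius_norm :: "real mat \<Rightarrow> real" where
  "frobenius_norm A = L2_set (\<lambda>i. vnorm (row A i)) {..<dim_row A}"

lemma vnorm_nonneg: "0 \<le> vnorm v"
  unfolding vnorm_def by (rule L2_set_nonneg)

lemma vnorm_power2: "vnorm v ^ 2 = v \<bullet> v"
proof -
  have "v \<bullet> v = (\<Sum>i<dim_vec v. (v $ i)\<^sup>2)"
    unfolding scalar_prod_def atLeast0LessThan power2_eq_square by (rule refl)
  then show ?thesis
    unfolding vnorm_def L2_set_def by (simp add: sum_nonneg)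
qed

lemma vnorm_zero [simp]: "vnorm (0\<^sub>v n) = 0"
  unfolding vnorm_def L2_set_def by simp

lemma vnorm_eq_0D:
  assumes "v \<in> carrier_vec n" "vnorm v = 0"
  shows "v = 0\<^sub>v n"
  using assms unfolding vnorm_def by (auto simp: L2_set_eq_0_iff intro!: eq_vecI)

lemma abs_scalar_prod_le:
  assumes "u \<in> carrier_vec n" "v \<in> carrier_vec n"
  shows "\<bar>u \<bullet> v\<bar> \<le> vnorm u * vnorm v"
proof -
  have "\<bar>u \<bullet> v\<bar> \<le> (\<Sum>i<n. \<bar>u $ i\<bar> * \<bar>v $ i\<bar>)"
    using assms unfolding scalar_prod_def
    by (auto simp: atLeast0LessThan abs_mult intro: order.trans[OF sum_abs])
  also have "\<dots> \<le> vnorm u * vnorm v"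
    using assms unfolding vnorm_def by (simp add: L2_set_mult_ineq)
  finally show ?thesis .
qed

lemma vnorm_add_le:
  assumes "u \<in> carrier_vec n" "v \<in> carrier_vec n"
  shows "vnorm (u + v) \<le> vnorm u + vnorm v"
proof -
  have "L2_set (\<lambda>i. (u + v) $ i) {..<n} = L2_set (\<lambda>i. u $ i + v $ i) {..<n}"
    using assms by (intro L2_set_cong) auto
  then show ?thesis
    using assms L2_set_triangle_ineq[of "\<lambda>i. u $ i" "\<lambda>i. v $ i" "{..<n}"]
    unfolding vnorm_def by simp
qed

lemma abs_index_le_vnorm:
  assumes "i < dim_vec v"
  shows "\<bar>v $ i\<bar> \<le> vnorm v"
  using assms member_le_L2_set[of "{..<dim_vec v}" i "\<lambda>i. \<bar>v $ i\<bar>"]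
  unfolding vnorm_def L2_set_def by simp

lemma frobenius_norm_nonneg: "0 \<le> frobenius_norm A"
  unfolding frobenius_norm_def by (rule L2_set_nonneg)

lemma vnorm_mult_mat_vec_le:
  assumes A: "A \<in> carrier_mat m k" and v: "v \<in> carrier_vec k"
  shows "vnorm (A *\<^sub>v v) \<le> frobenius_norm A * vnorm v"
proof -
  have "vnorm (A *\<^sub>v v) = L2_set (\<lambda>i. \<bar>row A i \<bullet> v\<bar>) {..<m}"
    using A v unfolding vnorm_def L2_set_def by simp
  also have "\<dots> \<le> L2_set (\<lambda>i. vnorm v * vnorm (row A i)) {..<m}"
  proof (rule L2_set_mono)
    fix i assume "i \<in> {..<m}"
    then have "row A i \<in> carrier_vec k"
      using A by auto
    then show "\<bar>row A i \<bullet> v\<bar> \<le> vnorm v * vnorm (row A i)"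
      using abs_scalar_prod_le[OF _ v] by (metis mult.commute)
  qed simp
  also have "\<dots> = frobenius_norm A * vnorm v"
    using A unfolding frobenius_norm_def
    by (simp add: L2_set_right_distrib vnorm_nonneg mult.commute)
  finally show ?thesis .
qed

lemma orthonormal_mult_vec_cancel:
  assumes "(Q :: real mat) \<in> carrier_mat n p" "Q\<^sup>T * Q = 1\<^sub>m p" "a \<in> carrier_vec p"
  shows "Q\<^sup>T *\<^sub>v (Q *\<^sub>v a) = a"
proof -
  have "Q\<^sup>T *\<^sub>v (Q *\<^sub>v a) = (Q\<^sup>T * Q) *\<^sub>v a"
    using assms by (intro assoc_mult_mat_vec[symmetric]) auto
  then show ?thesis
    using assms by simp
qed

lemma vnorm_isometry:
  assumes Q: "Q \<in> carrier_mat n p" and orth: "Q\<^sup>T * Q = 1\<^sub>m p" and a: "a \<in> carrier_vec p"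
  shows "vnorm (Q *\<^sub>v a) = vnorm a"
proof -
  have "vnorm (Q *\<^sub>v a) ^ 2 = (Q\<^sup>T *\<^sub>v (Q *\<^sub>v a)) \<bullet> a"
    using Q a by (simp add: vnorm_power2 transpose_vec_mult_scalar)
  also have "Q\<^sup>T *\<^sub>v (Q *\<^sub>v a) = a"
    by (rule orthonormal_mult_vec_cancel[OF Q orth a])
  finally have "vnorm (Q *\<^sub>v a) ^ 2 = vnorm a ^ 2"
    by (simp add: vnorm_power2)
  then show ?thesis
    using vnorm_nonneg power2_eq_iff_nonneg by blast
qed

text \<open>Variants of the matrix algebra laws with dimension equations instead of \<open>carrier_mat\<close>
  premises. The simplifier can discharge these side conditions,
  whereas the original premises mention dimensions that do not occur in the rewritten term.\<close>

lemma assoc_mult_mat':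
  "dim_col A = dim_row B \<Longrightarrow> dim_col B = dim_row C \<Longrightarrow> A * B * C = A * (B * (C :: 'a :: semiring_0 mat))"
  by (rule assoc_mult_mat[of A "dim_row A" "dim_col A" B "dim_col B" C "dim_col C"]) (auto intro: carrier_matI)

lemma add_mult_distrib_mat':
  "dim_row A = dim_row B \<Longrightarrow> dim_col A = dim_col B \<Longrightarrow> dim_col A = dim_row C \<Longrightarrow>
   (A + B) * C = A * C + B * (C :: 'a :: semiring_0 mat)"
  by (rule add_mult_distrib_mat[of A "dim_row A" "dim_col A" B C "dim_col C"]) (auto intro: carrier_matI)

lemma mult_add_distrib_mat':
  "dim_row B = dim_row C \<Longrightarrow> dim_col B = dim_col C \<Longrightarrow> dim_col A = dim_row B \<Longrightarrow>
   A * (B + C) = A * B + A * (C :: 'a :: semiring_0 mat)"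
  by (rule mult_add_distrib_mat[of A "dim_row A" "dim_col A" B "dim_col B" C]) (auto intro: carrier_matI)

lemma minus_mult_distrib_mat':
  "dim_row A = dim_row B \<Longrightarrow> dim_col A = dim_col B \<Longrightarrow> dim_col A = dim_row C \<Longrightarrow>
   (A - B) * C = A * C - B * (C :: 'a :: ring mat)"
  by (rule minus_mult_distrib_mat[of A "dim_row A" "dim_col A" B C "dim_col C"]) (auto intro: carrier_matI)

lemma mult_minus_distrib_mat':
  "dim_row B = dim_row C \<Longrightarrow> dim_col B = dim_col C \<Longrightarrow> dim_col A = dim_row B \<Longrightarrow>
   A * (B - C) = A * B - A * (C :: 'a :: ring mat)"
  by (rule mult_minus_distrib_mat[of A "dim_row A" "dim_col A" B "dim_col B" C]) (auto intro: carrier_matI)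

lemma mult_smult_distrib':
  "A * (k \<cdot>\<^sub>m B) = k \<cdot>\<^sub>m (A * (B :: 'a :: comm_semiring_0 mat))"
  by (intro eq_matI) (auto simp: scalar_prod_def sum_distrib_left ac_simps)

lemma mult_smult_assoc_mat':
  "dim_col A = dim_row B \<Longrightarrow> (k \<cdot>\<^sub>m A) * B = k \<cdot>\<^sub>m (A * (B :: 'a :: comm_semiring_0 mat))"
  by (rule mult_smult_assoc_mat[of A "dim_row A" "dim_col A" B "dim_col B"]) (auto intro: carrier_matI)

lemma smult_one_mult_mat:
  "dim_row A = n \<Longrightarrow> (s \<cdot>\<^sub>m 1\<^sub>m n) * A = s \<cdot>\<^sub>m (A :: 'a :: comm_semiring_1 mat)"
  by (simp add: mult_smult_assoc_mat')

lemma mult_smult_one_mat: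
  "dim_col A = n \<Longrightarrow> A * (s \<cdot>\<^sub>m 1\<^sub>m n) = s \<cdot>\<^sub>m (A :: 'a :: comm_semiring_1 mat)"
  by (simp add: mult_smult_distrib')

lemma assoc_mult_mat_vec':
  "dim_col A = dim_row B \<Longrightarrow> dim_col B = dim_vec v \<Longrightarrow> (A * B) *\<^sub>v v = A *\<^sub>v (B *\<^sub>v (v :: 'a :: semiring_0 vec))"
  by (rule assoc_mult_mat_vec[of A "dim_row A" "dim_col A" B "dim_col B"]) (auto intro: carrier_matI carrier_vecI)

lemma smult_mat_mult_vec:
  "dim_vec v = dim_col A \<Longrightarrow> (k \<cdot>\<^sub>m A) *\<^sub>v v = k \<cdot>\<^sub>v (A *\<^sub>v (v :: 'a :: comm_ring vec))"
  by (intro eq_vecI) (auto simp: scalar_prod_def sum_distrib_left ac_simps)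

lemma minus_zero_mat: "A \<in> carrier_mat nr nc \<Longrightarrow> A - 0\<^sub>m nr nc = (A :: 'a :: group_add mat)"
  by (intro eq_matI) auto

lemma smult_inverse_smult_mat: "k \<noteq> 0 \<Longrightarrow> (1 / k) \<cdot>\<^sub>m (k \<cdot>\<^sub>m A) = (A :: 'a :: field mat)"
  by (intro eq_matI) auto

lemma eq_minus_if_add_eq_mat:
  "A + B = C \<Longrightarrow> A \<in> carrier_mat nr nc \<Longrightarrow> B \<in> carrier_mat nr nc \<Longrightarrow> A = C - (B :: 'a :: ab_group_add mat)"
  by (intro eq_matI) (auto simp: algebra_simps)

lemmas mat_dim_simps = assoc_mult_mat' add_mult_distrib_mat' mult_add_distrib_mat'
  minus_mult_distrib_mat' mult_minus_distrib_mat' mult_smult_distrib' mult_smult_assoc_mat'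
  smult_one_mult_mat mult_smult_one_mat assoc_mult_mat_vec' minus_zero_mat

lemma mult_left_inverse_cancel:
  assumes "dim_col H = dim_row B" "H * B = 1\<^sub>m n" "dim_row X = n"
  shows "H * (B * X) = (X :: 'a :: semiring_1 mat)"
proof -
  have "dim_col B = n"
    using assms(2) by (metis index_mult_mat(3) index_one_mat(3))
  then have "H * (B * X) = (H * B) * X"
    using assms by (intro assoc_mult_mat'[symmetric]) auto
  then show ?thesis
    using assms by simp
qed

lemma minv_inverse:
  assumes A: "A \<in> carrier_mat n n"
    and ker: "\<And>v. v \<in> carrier_vec n \<Longrightarrow> A *\<^sub>v v = 0\<^sub>v n \<Longrightarrow> v = 0\<^sub>v n"
  shows "minv A \<in> carrier_mat n n" "A * minv A = 1\<^sub>m n" "minv A * A = 1\<^sub>m n"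
proof -
  have "det A \<noteq> 0"
    using det_0_iff_vec_prod_zero[OF A] ker by auto
  then have "A \<in> Units (ring_mat TYPE(real) n n)"
    by (rule det_non_zero_imp_unit[OF A])
  then obtain B where "mat_inverse A = Some B"
    using mat_inverse(1)[OF A] by fastforce
  then show "minv A \<in> carrier_mat n n" "A * minv A = 1\<^sub>m n" "minv A * A = 1\<^sub>m n"
    using mat_inverse(2)[OF A] unfolding minv_def by auto
qed

lemma shift_mult_mat_vec:
  assumes "A \<in> carrier_mat n n" "x \<in> carrier_vec n"
  shows "(A + s \<cdot>\<^sub>m 1\<^sub>m n) *\<^sub>v x = A *\<^sub>v x + s \<cdot>\<^sub>v (x :: real vec)"
proof -
  have "(A + s \<cdot>\<^sub>m 1\<^sub>m n) *\<^sub>v x = A *\<^sub>v x + (s \<cdot>\<^sub>m 1\<^sub>m n) *\<^sub>v x"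
    using assms by (simp add: add_mult_distrib_mat_vec[of _ n n])
  also have "(s \<cdot>\<^sub>m 1\<^sub>m n) *\<^sub>v x = s \<cdot>\<^sub>v x"
    using assms by (intro eq_vecI) (auto simp: scalar_prod_left_unit)
  finally show ?thesis .
qed

lemma psd_mat_shift_inverse:
  assumes A: "psd_mat n A" and s: "s > 0"
  shows "minv (A + s \<cdot>\<^sub>m 1\<^sub>m n) \<in> carrier_mat n n"
    "(A + s \<cdot>\<^sub>m 1\<^sub>m n) * minv (A + s \<cdot>\<^sub>m 1\<^sub>m n) = 1\<^sub>m n"
    "minv (A + s \<cdot>\<^sub>m 1\<^sub>m n) * (A + s \<cdot>\<^sub>m 1\<^sub>m n) = 1\<^sub>m n"
proof -
  have carrier: "A \<in> carrier_mat n n" and form: "\<And>x. x \<in> carrier_vec n \<Longrightarrow> 0 \<le> x \<bullet> (A *\<^sub>v x)"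
    using A unfolding psd_mat_def by auto
  have "x = 0\<^sub>v n" if x: "x \<in> carrier_vec n" and ker: "(A + s \<cdot>\<^sub>m 1\<^sub>m n) *\<^sub>v x = 0\<^sub>v n" for x
  proof -
    have "x \<bullet> (A *\<^sub>v x) + s * vnorm x ^ 2 = x \<bullet> ((A + s \<cdot>\<^sub>m 1\<^sub>m n) *\<^sub>v x)"
      using carrier x by (simp add: shift_mult_mat_vec scalar_prod_add_distrib[of _ n] vnorm_power2)
    also have "\<dots> = 0"
      using ker x by simp
    finally have "vnorm x = 0"
      using form[OF x] s by (smt (verit) mult_pos_pos zero_less_power2)
    then show ?thesis
      by (rule vnorm_eq_0D[OF x])
  qed
  then show "minv (A + s \<cdot>\<^sub>m 1\<^sub>m n) \<in> carrier_mat n n"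
    "(A + s \<cdot>\<^sub>m 1\<^sub>m n) * minv (A + s \<cdot>\<^sub>m 1\<^sub>m n) = 1\<^sub>m n"
    "minv (A + s \<cdot>\<^sub>m 1\<^sub>m n) * (A + s \<cdot>\<^sub>m 1\<^sub>m n) = 1\<^sub>m n"
    using minv_inverse[of "A + s \<cdot>\<^sub>m 1\<^sub>m n" n] carrier by auto
qed

lemma psd_mat_congruence:
  assumes A: "psd_mat n A" and U: "U \<in> carrier_mat n r"
  shows "psd_mat r (U\<^sup>T * A * U)"
proof -
  have carrier: "A \<in> carrier_mat n n" and sym: "A\<^sup>T = A"
    and form: "\<And>x. x \<in> carrier_vec n \<Longrightarrow> 0 \<le> x \<bullet> (A *\<^sub>v x)"
    using A unfolding psd_mat_def by auto
  have "x \<bullet> ((U\<^sup>T * A * U) *\<^sub>v x) = (U *\<^sub>v x) \<bullet> (A *\<^sub>v (U *\<^sub>v x))" if x: "x \<in> carrier_vec r" for x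
  proof -
    define w where "w = A *\<^sub>v (U *\<^sub>v x)"
    have w: "w \<in> carrier_vec n"
      using U carrier x unfolding w_def by simp
    have "x \<bullet> ((U\<^sup>T * A * U) *\<^sub>v x) = x \<bullet> (U\<^sup>T *\<^sub>v w)"
      using U carrier x unfolding w_def by (simp add: mat_dim_simps)
    also have "\<dots> = (U\<^sup>T *\<^sub>v w) \<bullet> x"
      using U w x by (intro comm_scalar_prod[of _ r]) auto
    also have "\<dots> = w \<bullet> (U *\<^sub>v x)"
      by (rule transpose_vec_mult_scalar[OF U x w])
    also have "\<dots> = (U *\<^sub>v x) \<bullet> w"
      using U w x by (intro comm_scalar_prod[of _ n]) auto
    finally show ?thesis
      unfolding w_def .
  qed
  moreover have "(U\<^sup>T * A * U)\<^sup>T = U\<^sup>T * A * U"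
  proof -
    have Ut: "U\<^sup>T \<in> carrier_mat r n"
      using U by simp
    have "(U\<^sup>T * A * U)\<^sup>T = U\<^sup>T * (U\<^sup>T * A)\<^sup>T"
      using transpose_mult[OF mult_carrier_mat[OF Ut carrier] U] by simp
    also have "(U\<^sup>T * A)\<^sup>T = A * U"
      using transpose_mult[OF Ut carrier] sym by simp
    also have "U\<^sup>T * (A * U) = U\<^sup>T * A * U"
      using U carrier by (simp add: mat_dim_simps)
    finally show ?thesis .
  qed
  ultimately show ?thesis
    using carrier U form unfolding psd_mat_def by auto
qed

lemma shift_mult_eq_imp_resolvent:
  assumes A: "psd_mat n A" and s: "s > 0" and X: "X \<in> carrier_mat n n"
    and eq: "(A + s \<cdot>\<^sub>m 1\<^sub>m n) * X = A"
  shows "X = A * minv (A + s \<cdot>\<^sub>m 1\<^sub>m n)"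
proof -
  define B where "B = A + s \<cdot>\<^sub>m 1\<^sub>m n"
  define H where "H = minv B"
  have An: "A \<in> carrier_mat n n"
    using A unfolding psd_mat_def by simp
  have B: "B \<in> carrier_mat n n" and H: "H \<in> carrier_mat n n"
    and BH: "B * H = 1\<^sub>m n" and HB: "H * B = 1\<^sub>m n"
    using psd_mat_shift_inverse[OF A s] An unfolding B_def H_def by auto
  have HBY: "H * (B * Y) = Y" if "dim_row Y = n" for Y
    using mult_left_inverse_cancel[OF _ HB that] H B by simp
  have "B * A = A * B"
    using An unfolding B_def by (simp add: mat_dim_simps)
  then have "B * (A * H) = A"
    using B An H BH by (simp flip: assoc_mult_mat[OF B An H])
  then have "H * A = A * H"
    using An H HBY[of "A * H"] by simp
  moreover have "X = H * A"
    using HBY[of X] X eq unfolding B_def by simp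
  ultimately show ?thesis
    unfolding H_def B_def by simp
qed

lemma resolvent_trunc_spectral:
  assumes A: "psd_mat n A" and s: "s > 0"
    and U: "U \<in> carrier_mat n r" and Lam: "Lam \<in> carrier_mat r r" and UU: "U\<^sup>T * U = 1\<^sub>m r"
    and decomp: "A = U * Lam * U\<^sup>T"
  shows "U * Lam * minv (Lam + s \<cdot>\<^sub>m 1\<^sub>m r) * U\<^sup>T = A * minv (A + s \<cdot>\<^sub>m 1\<^sub>m n)"
proof (rule shift_mult_eq_imp_resolvent[OF A s])
  define Lam' where "Lam' = Lam + s \<cdot>\<^sub>m 1\<^sub>m r"
  define Y where "Y = minv Lam'"
  have Lam': "Lam' \<in> carrier_mat r r"
    using Lam unfolding Lam'_def by auto
  have UX: "U\<^sup>T * (U * X) = X" if "dim_row X = r" for X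
    using mult_left_inverse_cancel[OF _ UU that] U by simp
  have "U\<^sup>T * A * U = Lam"
    using U Lam UU unfolding decomp by (simp add: mat_dim_simps UX)
  then have Y: "Y \<in> carrier_mat r r" and LY: "Lam' * Y = 1\<^sub>m r"
    using psd_mat_shift_inverse[OF psd_mat_congruence[OF A U] s] unfolding Y_def Lam'_def by auto
  have shift_U: "(A + s \<cdot>\<^sub>m 1\<^sub>m n) * (U * X) = U * (Lam' * X)" if "dim_row X = r" for X
    using U Lam that UU unfolding Lam'_def decomp by (simp add: mat_dim_simps UX)
  have comm: "Lam' * (Lam * X) = Lam * (Lam' * X)" if "dim_row X = r" for X
    using Lam that unfolding Lam'_def by (simp add: mat_dim_simps)
  have LYX: "Lam' * (Y * X) = X" if "dim_row X = r" for X
    using mult_left_inverse_cancel[OF _ LY that] Lam' Y by simp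
  show "U * Lam * minv (Lam + s \<cdot>\<^sub>m 1\<^sub>m r) * U\<^sup>T \<in> carrier_mat n n"
    using U Lam Y unfolding Y_def Lam'_def by auto
  have "(A + s \<cdot>\<^sub>m 1\<^sub>m n) * (U * Lam * Y * U\<^sup>T) = U * (Lam' * (Lam * (Y * U\<^sup>T)))"
    using U Lam Y by (simp add: assoc_mult_mat' shift_U)
  also have "\<dots> = A"
    using U Lam Y unfolding decomp by (simp add: assoc_mult_mat' comm LYX)
  finally show "(A + s \<cdot>\<^sub>m 1\<^sub>m n) * (U * Lam * minv (Lam + s \<cdot>\<^sub>m 1\<^sub>m r) * U\<^sup>T) = A"
    unfolding Y_def Lam'_def .
qed

lemma colspace_factor:
  assumes A: "A \<in> carrier_mat n k" and B: "B \<in> carrier_mat n m" and sub: "colspace A \<subseteq> colspace B"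
  shows "\<exists>T \<in> carrier_mat m k. A = B * T"
proof -
  have "\<forall>j. \<exists>y. j < k \<longrightarrow> y \<in> carrier_vec m \<and> B *\<^sub>v y = col A j"
  proof
    fix j
    show "\<exists>y. j < k \<longrightarrow> y \<in> carrier_vec m \<and> B *\<^sub>v y = col A j"
    proof (cases "j < k")
      case True
      have "A *\<^sub>v unit_vec k j = col A j"
        using A True by (intro eq_vecI) auto
      then have "col A j \<in> colspace A"
        using A unfolding colspace_def by (intro CollectI exI[of _ "unit_vec k j"]) auto
      then obtain y where "y \<in> carrier_vec m" "B *\<^sub>v y = col A j"
        using sub B unfolding colspace_def by auto
      then show ?thesis
        by blast
    qed simp
  qed
  then obtain y where y: "\<And>j. j < k \<Longrightarrow> y j \<in> carrier_vec m \<and> B *\<^sub>v y j = col A j"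
    by metis
  define T where "T = mat m k (\<lambda>(i, j). y j $ i)"
  have T: "T \<in> carrier_mat m k"
    unfolding T_def by simp
  have "A = B * T"
  proof (rule eq_matI)
    fix i j assume "i < dim_row (B * T)" "j < dim_col (B * T)"
    then have i: "i < n" and j: "j < k"
      using B T by auto
    have "col T j = y j"
      using y[OF j] j unfolding T_def by (intro eq_vecI) auto
    then have "(B * T) $$ (i, j) = (B *\<^sub>v y j) $ i"
      using B T i j by simp
    then show "A $$ (i, j) = (B * T) $$ (i, j)"
      using y[OF j] A i j by simp
  qed (use A B T in auto)
  then show ?thesis
    unfolding T_def by auto
qed

lemma symmetric_form_add:
  assumes A: "A \<in> carrier_mat n n" "A\<^sup>T = A" and x: "x \<in> carrier_vec n" and y: "y \<in> carrier_vec n"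
  shows "(x + y) \<bullet> (A *\<^sub>v (x + y)) = x \<bullet> (A *\<^sub>v x) + 2 * (y \<bullet> (A *\<^sub>v x)) + y \<bullet> (A *\<^sub>v (y :: real vec))"
proof -
  have "x \<bullet> (A *\<^sub>v y) = (A\<^sup>T *\<^sub>v x) \<bullet> y"
    by (rule transpose_vec_mult_scalar[OF A(1) y x, symmetric])
  also have "\<dots> = y \<bullet> (A *\<^sub>v x)"
    using A x y comm_scalar_prod[of "A *\<^sub>v x" n y] by simp
  finally have "x \<bullet> (A *\<^sub>v y) = y \<bullet> (A *\<^sub>v x)" .
  then show ?thesis
    using A x y
    by (simp add: mult_add_distrib_mat_vec[of _ n n] scalar_prod_add_distrib[of _ n]
        add_scalar_prod_distrib[of _ n])
qed

lemma quadratic_absorb: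
  fixes x y c k :: real
  assumes "0 \<le> x" "0 \<le> c" "0 \<le> y" "x\<^sup>2 \<le> c * (x * y + k * x\<^sup>2)" "c * k \<le> 1 / 2"
  shows "x \<le> 2 * c * y"
proof (cases "x = 0")
  case False
  have "c * k * x\<^sup>2 \<le> 1 / 2 * x\<^sup>2"
    using assms(5) by (rule mult_right_mono) simp
  then have "x * x \<le> x * (2 * c * y)"
    using assms(4) by (simp add: algebra_simps power2_eq_square)
  then show ?thesis
    using assms(1) False by simp
qed (use assms in auto)

lemma bigo_at_right_0I:
  fixes f :: "real \<Rightarrow> real"
  assumes "0 < e0" and "\<And>x. 0 < x \<Longrightarrow> x < e0 \<Longrightarrow> \<bar>f x\<bar> \<le> c * x"
  shows "f \<in> O[at_right 0](\<lambda>x. x)"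
proof (rule bigoI[where c = c])
  show "\<forall>\<^sub>F x in at_right 0. norm (f x) \<le> c * norm x"
    using eventually_at_right_real[OF assms(1)] by eventually_elim (use assms(2) in auto)
qed

locale diffuse_prior =
  fixes n p :: nat and L V Q :: "real mat" and s2 :: real
  assumes L: "L \<in> carrier_mat n n" and L_sym: "L\<^sup>T = L"
    and V: "V \<in> carrier_mat n p"
    and Q: "Q \<in> carrier_mat n p" and Q_orth: "Q\<^sup>T * Q = 1\<^sub>m p"
    and span: "colspace Q = colspace V"
    and psd: "psd_mat n (Ltilde n L Q)"
    and s2: "s2 > 0"

context diffuse_prior
begin

definition proj_compl :: "real mat" where
  "proj_compl = 1\<^sub>m n - Q * Q\<^sup>T"

definition marginal_cov :: "real \<Rightarrow> real mat" where
  "marginal_cov eps = L + s2 \<cdot>\<^sub>m 1\<^sub>m n + (1 / eps) \<cdot>\<^sub>m (V * V\<^sup>T)"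

lemma proj_compl_carrier: "proj_compl \<in> carrier_mat n n"
  unfolding proj_compl_def using Q by auto

lemma proj_compl_sym: "proj_compl\<^sup>T = proj_compl"
proof -
  have "Q * Q\<^sup>T \<in> carrier_mat n n" "(Q * Q\<^sup>T)\<^sup>T = Q * Q\<^sup>T"
    using Q transpose_mult[of Q n p "Q\<^sup>T" n] by auto
  then show ?thesis
    unfolding proj_compl_def by (simp add: transpose_minus[of _ n n])
qed

lemma Ltilde_eq: "Ltilde n L Q = proj_compl * L * proj_compl"
  unfolding Ltilde_def proj_compl_def ..

lemma marginal_cov_carrier: "marginal_cov eps \<in> carrier_mat n n"
  using L V unfolding marginal_cov_def by auto

lemma dim_marginal_cov [simp]: "dim_row (marginal_cov eps) = n" "dim_col (marginal_cov eps) = n"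
  using marginal_cov_carrier by auto

lemma V_factor:
  obtains T where "T \<in> carrier_mat p p" "V = Q * T"
  using colspace_factor[OF V Q] span by auto

lemma Q_factor:
  obtains S where "S \<in> carrier_mat p p" "Q = V * S"
  using colspace_factor[OF Q V] span by auto

lemma proj_compl_mult_vec:
  assumes "x \<in> carrier_vec n"
  shows "proj_compl *\<^sub>v x = x - Q *\<^sub>v (Q\<^sup>T *\<^sub>v x)"
  using assms Q unfolding proj_compl_def by (simp add: minus_mult_distrib_mat_vec[of _ n n] mat_dim_simps)

lemma Qt_proj_compl_mult_vec:
  assumes "x \<in> carrier_vec n"
  shows "Q\<^sup>T *\<^sub>v (proj_compl *\<^sub>v x) = 0\<^sub>v p"
  using assms Q by (simp add: proj_compl_mult_vec mult_minus_distrib_mat_vec[of _ p n] orthonormal_mult_vec_cancel[OF Q Q_orth])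

lemma vec_split:
  assumes "x \<in> carrier_vec n"
  shows "x = Q *\<^sub>v (Q\<^sup>T *\<^sub>v x) + proj_compl *\<^sub>v x"
  using assms Q by (intro eq_vecI) (auto simp: proj_compl_mult_vec)

lemma proj_compl_orthogonal:
  assumes x: "x \<in> carrier_vec n" and y: "y \<in> carrier_vec p"
  shows "(proj_compl *\<^sub>v x) \<bullet> (Q *\<^sub>v y) = 0"
proof -
  have "(proj_compl *\<^sub>v x) \<bullet> (Q *\<^sub>v y) = (Q\<^sup>T *\<^sub>v (proj_compl *\<^sub>v x)) \<bullet> y"
    using proj_compl_carrier Q x y by (intro transpose_vec_mult_scalar[symmetric]) auto
  then show ?thesis
    using x y by (simp add: Qt_proj_compl_mult_vec)
qed

lemma proj_compl_orthogonal_V: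
  assumes x: "x \<in> carrier_vec n" and y: "y \<in> carrier_vec p"
  shows "(proj_compl *\<^sub>v x) \<bullet> (V *\<^sub>v y) = 0"
proof -
  obtain T where T: "T \<in> carrier_mat p p" and VQT: "V = Q * T"
    by (rule V_factor)
  have "V *\<^sub>v y = Q *\<^sub>v (T *\<^sub>v y)"
    using Q T y unfolding VQT by simp
  then show ?thesis
    using proj_compl_orthogonal[OF x] T y by simp
qed

lemma proj_compl_scalar_prod_self:
  assumes x: "x \<in> carrier_vec n"
  shows "(proj_compl *\<^sub>v x) \<bullet> x = vnorm (proj_compl *\<^sub>v x) ^ 2"
proof -
  have "(proj_compl *\<^sub>v x) \<bullet> x = (proj_compl *\<^sub>v x) \<bullet> (Q *\<^sub>v (Q\<^sup>T *\<^sub>v x)) + (proj_compl *\<^sub>v x) \<bullet> (proj_compl *\<^sub>v x)"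
    using x Q proj_compl_carrier vec_split[OF x] by (metis scalar_prod_add_distrib mult_mat_vec_carrier transpose_carrier_mat)
  then show ?thesis
    using x Q by (simp add: proj_compl_orthogonal vnorm_power2)
qed

lemma orthogonal_form_nonneg:
  assumes x: "x \<in> carrier_vec n"
  shows "0 \<le> (proj_compl *\<^sub>v x) \<bullet> (L *\<^sub>v (proj_compl *\<^sub>v x))"
proof -
  have "x \<bullet> (Ltilde n L Q *\<^sub>v x) = x \<bullet> (proj_compl *\<^sub>v (L *\<^sub>v (proj_compl *\<^sub>v x)))"
    using x L proj_compl_carrier unfolding Ltilde_eq by (simp add: mat_dim_simps)
  also have "\<dots> = (proj_compl *\<^sub>v x) \<bullet> (L *\<^sub>v (proj_compl *\<^sub>v x))"
    using transpose_vec_mult_scalar[of proj_compl n n "L *\<^sub>v (proj_compl *\<^sub>v x)" x] x L proj_compl_carrier proj_compl_sym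
    by (simp add: comm_scalar_prod[of x n])
  finally show ?thesis
    using psd x unfolding psd_mat_def by metis
qed

lemma marginal_cov_mult_vec:
  assumes d: "d \<in> carrier_vec n"
  shows "marginal_cov eps *\<^sub>v d = L *\<^sub>v d + s2 \<cdot>\<^sub>v d + (1 / eps) \<cdot>\<^sub>v (V *\<^sub>v (V\<^sup>T *\<^sub>v d))"
proof -
  have "marginal_cov eps *\<^sub>v d = (L + s2 \<cdot>\<^sub>m 1\<^sub>m n) *\<^sub>v d + ((1 / eps) \<cdot>\<^sub>m (V * V\<^sup>T)) *\<^sub>v d"
    unfolding marginal_cov_def by (rule add_mult_distrib_mat_vec) (use L V d in auto)
  also have "(L + s2 \<cdot>\<^sub>m 1\<^sub>m n) *\<^sub>v d = L *\<^sub>v d + s2 \<cdot>\<^sub>v d"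
    by (rule shift_mult_mat_vec[OF L d])
  also have "((1 / eps) \<cdot>\<^sub>m (V * V\<^sup>T)) *\<^sub>v d = (1 / eps) \<cdot>\<^sub>v (V *\<^sub>v (V\<^sup>T *\<^sub>v d))"
    using V d by (simp add: smult_mat_mult_vec mat_dim_simps)
  finally show ?thesis .
qed

lemma orthogonal_part_bound:
  assumes d: "d \<in> carrier_vec n" and u: "u \<in> carrier_vec p" and eq: "marginal_cov eps *\<^sub>v d = Q *\<^sub>v u"
  shows "s2 * vnorm (proj_compl *\<^sub>v d) \<le> frobenius_norm (L * Q) * vnorm (Q\<^sup>T *\<^sub>v d)"
proof -
  define a b where "a = Q\<^sup>T *\<^sub>v d" and "b = proj_compl *\<^sub>v d"
  have a: "a \<in> carrier_vec p" and b: "b \<in> carrier_vec n" and Qa: "Q *\<^sub>v a \<in> carrier_vec n"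
    using Q proj_compl_carrier d unfolding a_def b_def by auto
  have "b \<bullet> (marginal_cov eps *\<^sub>v d) = 0"
    using proj_compl_orthogonal[OF d u] unfolding eq b_def .
  moreover have "b \<bullet> (marginal_cov eps *\<^sub>v d) = b \<bullet> (L *\<^sub>v d) + s2 * vnorm b ^ 2"
    using b d L V unfolding marginal_cov_mult_vec[OF d] b_def
    by (simp add: scalar_prod_add_distrib[of _ n] proj_compl_scalar_prod_self proj_compl_orthogonal_V)
  moreover have "b \<bullet> (L *\<^sub>v d) = b \<bullet> (L *\<^sub>v (Q *\<^sub>v a)) + b \<bullet> (L *\<^sub>v b)"
  proof -
    have "L *\<^sub>v d = L *\<^sub>v (Q *\<^sub>v a) + L *\<^sub>v b"
      using vec_split[OF d] mult_add_distrib_mat_vec[OF L Qa b] unfolding a_def b_def by simp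
    then show ?thesis
      using L Qa b by (simp add: scalar_prod_add_distrib[of _ n])
  qed
  moreover have "0 \<le> b \<bullet> (L *\<^sub>v b)"
    unfolding b_def by (rule orthogonal_form_nonneg[OF d])
  moreover have "\<bar>b \<bullet> (L *\<^sub>v (Q *\<^sub>v a))\<bar> \<le> vnorm b * (frobenius_norm (L * Q) * vnorm a)"
  proof -
    have "L *\<^sub>v (Q *\<^sub>v a) = (L * Q) *\<^sub>v a"
      using L Q a by simp
    then show ?thesis
      using abs_scalar_prod_le[OF b, of "L *\<^sub>v (Q *\<^sub>v a)"] vnorm_mult_mat_vec_le[of "L * Q" n p a] L Q a
      by (simp add: mult_left_mono vnorm_nonneg order.trans)
  qed
  ultimately have "vnorm b * (s2 * vnorm b) \<le> vnorm b * (frobenius_norm (L * Q) * vnorm a)"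
    by (simp add: power2_eq_square algebra_simps)
  then show ?thesis
    using vnorm_nonneg[of b] frobenius_norm_nonneg[of "L * Q"] vnorm_nonneg[of a]
    unfolding a_def b_def by (cases "vnorm (proj_compl *\<^sub>v d) = 0") auto
qed

lemma form_lower_bound:
  assumes d: "d \<in> carrier_vec n" and u: "u \<in> carrier_vec p" and eq: "marginal_cov eps *\<^sub>v d = Q *\<^sub>v u"
  defines "c \<equiv> frobenius_norm (L * Q)"
  shows "- (c + 2 * c\<^sup>2 / s2) * vnorm (Q\<^sup>T *\<^sub>v d) ^ 2 \<le> d \<bullet> (L *\<^sub>v d)"
proof -
  define a b z where "a = Q\<^sup>T *\<^sub>v d" and "b = proj_compl *\<^sub>v d" and "z = L *\<^sub>v (Q *\<^sub>v a)"
  have a: "a \<in> carrier_vec p" and b: "b \<in> carrier_vec n" and Qa: "Q *\<^sub>v a \<in> carrier_vec n"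
    using Q proj_compl_carrier d unfolding a_def b_def by auto
  have c: "0 \<le> c"
    unfolding c_def by (rule frobenius_norm_nonneg)
  have z: "z \<in> carrier_vec n" and "vnorm z \<le> c * vnorm a"
    using vnorm_mult_mat_vec_le[of "L * Q" n p a] L Q a unfolding z_def c_def by auto
  have "d \<bullet> (L *\<^sub>v d) = (Q *\<^sub>v a) \<bullet> z + 2 * (b \<bullet> z) + b \<bullet> (L *\<^sub>v b)"
    using symmetric_form_add[OF L L_sym Qa b] vec_split[OF d] unfolding a_def b_def z_def by simp
  moreover have "\<bar>(Q *\<^sub>v a) \<bullet> z\<bar> \<le> c * vnorm a ^ 2"
  proof -
    have "vnorm a * vnorm z \<le> vnorm a * (c * vnorm a)"
      using \<open>vnorm z \<le> c * vnorm a\<close> by (rule mult_left_mono) (rule vnorm_nonneg)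
    then show ?thesis
      using abs_scalar_prod_le[OF Qa z] vnorm_isometry[OF Q Q_orth a] by (simp add: power2_eq_square ac_simps)
  qed
  moreover have "\<bar>b \<bullet> z\<bar> \<le> c\<^sup>2 / s2 * vnorm a ^ 2"
  proof -
    have "vnorm b \<le> c / s2 * vnorm a"
      using orthogonal_part_bound[OF d u eq] s2 unfolding a_def b_def c_def
      by (simp add: field_simps)
    then have "vnorm b * vnorm z \<le> (c / s2 * vnorm a) * (c * vnorm a)"
      using \<open>vnorm z \<le> c * vnorm a\<close> c s2 by (intro mult_mono) (auto simp: vnorm_nonneg)
    then show ?thesis
      using abs_scalar_prod_le[OF b z] by (simp add: power2_eq_square field_simps)
  qed
  moreover have "0 \<le> b \<bullet> (L *\<^sub>v b)"
    unfolding b_def by (rule orthogonal_form_nonneg[OF d])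
  ultimately show ?thesis
    unfolding a_def[symmetric] by (simp add: algebra_simps abs_le_iff)
qed

lemma energy_identity:
  assumes d: "d \<in> carrier_vec n"
  shows "d \<bullet> (marginal_cov eps *\<^sub>v d) = d \<bullet> (L *\<^sub>v d) + s2 * vnorm d ^ 2 + (1 / eps) * vnorm (V\<^sup>T *\<^sub>v d) ^ 2"
proof -
  have "d \<bullet> (V *\<^sub>v (V\<^sup>T *\<^sub>v d)) = vnorm (V\<^sup>T *\<^sub>v d) ^ 2"
    using transpose_vec_mult_scalar[of V n p "V\<^sup>T *\<^sub>v d" d] V d by (simp add: vnorm_power2)
  then show ?thesis
    using d L V by (simp add: marginal_cov_mult_vec scalar_prod_add_distrib[of _ n] vnorm_power2)
qed

lemma vnorm_le_span_part:
  assumes d: "d \<in> carrier_vec n" and u: "u \<in> carrier_vec p" and eq: "marginal_cov eps *\<^sub>v d = Q *\<^sub>v u"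
  shows "vnorm d \<le> (1 + frobenius_norm (L * Q) / s2) * vnorm (Q\<^sup>T *\<^sub>v d)"
proof -
  define a where "a = Q\<^sup>T *\<^sub>v d"
  have a: "a \<in> carrier_vec p"
    using Q d unfolding a_def by simp
  have "vnorm d \<le> vnorm (Q *\<^sub>v a) + vnorm (proj_compl *\<^sub>v d)"
    using vnorm_add_le[of "Q *\<^sub>v a" n "proj_compl *\<^sub>v d"] vec_split[OF d] Q proj_compl_carrier a d
    unfolding a_def by simp
  also have "\<dots> \<le> (1 + frobenius_norm (L * Q) / s2) * vnorm a"
    using orthogonal_part_bound[OF d u eq] vnorm_isometry[OF Q Q_orth a] s2
    unfolding a_def by (simp add: field_simps)
  finally show ?thesis
    unfolding a_def .
qed

lemma span_part_energy_bound:
  assumes S: "S \<in> carrier_mat p p" "Q = V * S" and eps: "0 < eps"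
    and d: "d \<in> carrier_vec n" and u: "u \<in> carrier_vec p" and eq: "marginal_cov eps *\<^sub>v d = Q *\<^sub>v u"
  defines "k \<equiv> frobenius_norm (L * Q) + 2 * (frobenius_norm (L * Q))\<^sup>2 / s2"
  shows "vnorm (Q\<^sup>T *\<^sub>v d) ^ 2
    \<le> (frobenius_norm S\<^sup>T)\<^sup>2 * eps * (vnorm (Q\<^sup>T *\<^sub>v d) * vnorm u + k * vnorm (Q\<^sup>T *\<^sub>v d) ^ 2)"
proof -
  define a where "a = Q\<^sup>T *\<^sub>v d"
  have a: "a \<in> carrier_vec p"
    using Q d unfolding a_def by simp
  have "d \<bullet> (marginal_cov eps *\<^sub>v d) = a \<bullet> u"
    using transpose_vec_mult_scalar[OF Q u d] unfolding eq a_def ..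
  moreover have "- k * vnorm a ^ 2 \<le> d \<bullet> (L *\<^sub>v d)"
    using form_lower_bound[OF d u eq] unfolding a_def k_def .
  moreover have "0 \<le> s2 * vnorm d ^ 2"
    using s2 by simp
  ultimately have "(1 / eps) * vnorm (V\<^sup>T *\<^sub>v d) ^ 2 \<le> vnorm a * vnorm u + k * vnorm a ^ 2"
    using energy_identity[OF d, of eps] abs_scalar_prod_le[OF a u] abs_ge_self[of "a \<bullet> u"]
    by linarith
  then have energy: "vnorm (V\<^sup>T *\<^sub>v d) ^ 2 \<le> eps * (vnorm a * vnorm u + k * vnorm a ^ 2)"
    using eps by (simp add: field_simps)
  have "a = S\<^sup>T *\<^sub>v (V\<^sup>T *\<^sub>v d)"
    using V S d unfolding a_def by (simp add: transpose_mult[of V n p S p] mat_dim_simps)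
  then have "vnorm a \<le> frobenius_norm S\<^sup>T * vnorm (V\<^sup>T *\<^sub>v d)"
    using vnorm_mult_mat_vec_le[of "S\<^sup>T" p p "V\<^sup>T *\<^sub>v d"] S V d by simp
  then have "vnorm a ^ 2 \<le> (frobenius_norm S\<^sup>T)\<^sup>2 * vnorm (V\<^sup>T *\<^sub>v d) ^ 2"
    by (metis power_mono power_mult_distrib vnorm_nonneg)
  also have "\<dots> \<le> (frobenius_norm S\<^sup>T)\<^sup>2 * eps * (vnorm a * vnorm u + k * vnorm a ^ 2)"
    using energy by (simp add: mult_left_mono mult.assoc)
  finally show ?thesis
    unfolding a_def .
qed

lemma solution_bound_on_span:
  obtains e0 C where "0 < e0"
    and "\<And>eps d u. 0 < eps \<Longrightarrow> eps < e0 \<Longrightarrow> d \<in> carrier_vec n \<Longrightarrow> u \<in> carrier_vec p \<Longrightarrow>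
      marginal_cov eps *\<^sub>v d = Q *\<^sub>v u \<Longrightarrow> vnorm d \<le> C * eps * vnorm u"
proof -
  obtain S where S: "S \<in> carrier_mat p p" "Q = V * S"
    by (rule Q_factor)
  define c where "c = frobenius_norm (L * Q)"
  define k where "k = c + 2 * c\<^sup>2 / s2"
  define cS where "cS = frobenius_norm S\<^sup>T"
  have c: "0 \<le> c" and k: "0 \<le> k"
    unfolding k_def c_def using frobenius_norm_nonneg[of "L * Q"] s2 by auto
  define e0 where "e0 = 1 / (2 * (cS\<^sup>2 * k + 1))"
  have e0: "0 < e0"
    unfolding e0_def using k by (simp add: add_nonneg_pos)
  have "vnorm d \<le> 2 * cS\<^sup>2 * (1 + c / s2) * eps * vnorm u"
    if eps: "0 < eps" "eps < e0" and d: "d \<in> carrier_vec n" and u: "u \<in> carrier_vec p"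
      and eq: "marginal_cov eps *\<^sub>v d = Q *\<^sub>v u" for eps d u
  proof -
    have "cS\<^sup>2 * eps * k = (cS\<^sup>2 * k) * eps"
      by (simp add: ac_simps)
    also have "\<dots> \<le> cS\<^sup>2 * k * e0"
      using eps k by (intro mult_left_mono) auto
    also have "\<dots> \<le> 1 / 2"
    proof -
      have "0 < 2 * (cS\<^sup>2 * k + 1)"
        using k by (simp add: add_nonneg_pos)
      then show ?thesis
        unfolding e0_def by (simp add: pos_divide_le_eq)
    qed
    finally have "vnorm (Q\<^sup>T *\<^sub>v d) \<le> 2 * (cS\<^sup>2 * eps) * vnorm u"
      using quadratic_absorb[OF vnorm_nonneg _ vnorm_nonneg span_part_energy_bound[OF S eps(1) d u eq]] eps
      unfolding k_def c_def cS_def by simp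
    then have "(1 + c / s2) * vnorm (Q\<^sup>T *\<^sub>v d) \<le> (1 + c / s2) * (2 * (cS\<^sup>2 * eps) * vnorm u)"
      using c s2 by (intro mult_left_mono) auto
    then show ?thesis
      using vnorm_le_span_part[OF d u eq] unfolding c_def by (simp add: ac_simps)
  qed
  then show ?thesis
    using e0 that by blast
qed

text \<open>\<open>marginal_cov eps\<close> is \<open>A\<^sub>\<epsilon>\<close> of the proof idea; \<open>limit_inv\<close> is \<open>K\<close> and \<open>residual\<close> is
  \<open>I - A\<^sub>\<epsilon> K\<close>.\<close>

definition resolvent :: "real mat" where
  "resolvent = minv (Ltilde n L Q + s2 \<cdot>\<^sub>m 1\<^sub>m n)"

definition limit_inv :: "real mat" where
  "limit_inv = resolvent - (1 / s2) \<cdot>\<^sub>m (Q * Q\<^sup>T)"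

definition residual :: "real mat" where
  "residual = 1\<^sub>m n - (L + s2 \<cdot>\<^sub>m 1\<^sub>m n) * limit_inv"

lemma Ltilde_carrier: "Ltilde n L Q \<in> carrier_mat n n"
  using psd unfolding psd_mat_def by simp

lemma resolvent_inverse:
  "resolvent \<in> carrier_mat n n" "(Ltilde n L Q + s2 \<cdot>\<^sub>m 1\<^sub>m n) * resolvent = 1\<^sub>m n" "resolvent * (Ltilde n L Q + s2 \<cdot>\<^sub>m 1\<^sub>m n) = 1\<^sub>m n"
  using psd_mat_shift_inverse[OF psd s2] unfolding resolvent_def by auto

lemma limit_inv_carrier: "limit_inv \<in> carrier_mat n n"
  using resolvent_inverse(1) Q unfolding limit_inv_def by auto

lemma proj_compl_mult_Q: "proj_compl * Q = 0\<^sub>m n p"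
  using Q Q_orth unfolding proj_compl_def by (simp add: mat_dim_simps)

lemma Qt_mult_QQt: "Q\<^sup>T * (Q * Q\<^sup>T) = Q\<^sup>T"
  using mult_left_inverse_cancel[OF _ Q_orth, of "Q\<^sup>T"] Q by simp

lemma Qt_mult_proj_compl: "Q\<^sup>T * proj_compl = 0\<^sub>m p n"
  using Q unfolding proj_compl_def by (simp add: mat_dim_simps Qt_mult_QQt)

lemma Qt_mult_proj_compl_mult:
  assumes "dim_row X = n"
  shows "Q\<^sup>T * (proj_compl * X) = 0\<^sub>m p (dim_col X)"
proof -
  have "Q\<^sup>T * (proj_compl * X) = (Q\<^sup>T * proj_compl) * X"
    using Q proj_compl_carrier assms by (intro assoc_mult_mat'[symmetric]) auto
  then show ?thesis
    using assms by (simp add: Qt_mult_proj_compl)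
qed

lemma Qt_mult_resolvent: "Q\<^sup>T * resolvent = (1 / s2) \<cdot>\<^sub>m Q\<^sup>T"
proof -
  define B where "B = Ltilde n L Q + s2 \<cdot>\<^sub>m 1\<^sub>m n"
  have B: "B \<in> carrier_mat n n" and Qt: "Q\<^sup>T \<in> carrier_mat p n"
    using Ltilde_carrier Q unfolding B_def by auto
  have QtB: "Q\<^sup>T * B = s2 \<cdot>\<^sub>m Q\<^sup>T"
    using Q L proj_compl_carrier unfolding Ltilde_eq B_def by (simp add: mat_dim_simps Qt_mult_proj_compl_mult)
  have "Q\<^sup>T = Q\<^sup>T * (B * resolvent)"
    using resolvent_inverse(2) Q unfolding B_def by simp
  also have "\<dots> = (Q\<^sup>T * B) * resolvent"
    by (rule assoc_mult_mat[symmetric, OF Qt B resolvent_inverse(1)])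
  also have "\<dots> = s2 \<cdot>\<^sub>m (Q\<^sup>T * resolvent)"
    using Q resolvent_inverse(1) unfolding QtB by (simp add: mat_dim_simps)
  finally have "(1 / s2) \<cdot>\<^sub>m Q\<^sup>T = (1 / s2) \<cdot>\<^sub>m (s2 \<cdot>\<^sub>m (Q\<^sup>T * resolvent))"
    by simp
  also have "\<dots> = Q\<^sup>T * resolvent"
    using s2 by (intro eq_matI) auto
  finally show ?thesis ..
qed

lemma Qt_mult_limit_inv: "Q\<^sup>T * limit_inv = 0\<^sub>m p n"
  using Q resolvent_inverse(1) unfolding limit_inv_def by (simp add: mat_dim_simps Qt_mult_resolvent Qt_mult_QQt)

lemma proj_compl_mult_limit_inv: "proj_compl * limit_inv = limit_inv"
proof -
  have "proj_compl * limit_inv = limit_inv - Q * (Q\<^sup>T * limit_inv)"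
    using Q limit_inv_carrier unfolding proj_compl_def by (simp add: mat_dim_simps)
  then show ?thesis
    using Q limit_inv_carrier by (simp add: Qt_mult_limit_inv minus_zero_mat)
qed

lemma Vt_mult_limit_inv: "V\<^sup>T * limit_inv = 0\<^sub>m p n"
proof -
  obtain T where T: "T \<in> carrier_mat p p" and VQT: "V = Q * T"
    by (rule V_factor)
  have "V\<^sup>T * limit_inv = T\<^sup>T * (Q\<^sup>T * limit_inv)"
    using Q T limit_inv_carrier unfolding VQT by (simp add: transpose_mult[of Q n p T p] mat_dim_simps)
  then show ?thesis
    using T by (simp add: Qt_mult_limit_inv)
qed

lemma marginal_cov_mult_limit_inv: "marginal_cov eps * limit_inv = (L + s2 \<cdot>\<^sub>m 1\<^sub>m n) * limit_inv"
proof -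
  have "V * (V\<^sup>T * limit_inv) = 0\<^sub>m n n"
    using V by (simp add: Vt_mult_limit_inv)
  then show ?thesis
    using L V limit_inv_carrier unfolding marginal_cov_def by (simp add: mat_dim_simps)
qed

lemma shifted_Ltilde_mult_limit_inv: "(Ltilde n L Q + s2 \<cdot>\<^sub>m 1\<^sub>m n) * limit_inv = proj_compl"
proof -
  have "Ltilde n L Q * Q = 0\<^sub>m n p"
    using L Q proj_compl_carrier unfolding Ltilde_eq by (simp add: mat_dim_simps proj_compl_mult_Q)
  then have BQ: "(Ltilde n L Q + s2 \<cdot>\<^sub>m 1\<^sub>m n) * Q = s2 \<cdot>\<^sub>m Q"
    using Ltilde_carrier Q by (simp add: mat_dim_simps)
  have "(Ltilde n L Q + s2 \<cdot>\<^sub>m 1\<^sub>m n) * (Q * Q\<^sup>T) = ((Ltilde n L Q + s2 \<cdot>\<^sub>m 1\<^sub>m n) * Q) * Q\<^sup>T"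
    using Ltilde_carrier Q by (intro assoc_mult_mat[symmetric]) auto
  then have "(Ltilde n L Q + s2 \<cdot>\<^sub>m 1\<^sub>m n) * (Q * Q\<^sup>T) = s2 \<cdot>\<^sub>m (Q * Q\<^sup>T)"
    using Q unfolding BQ by (simp add: mat_dim_simps)
  then show ?thesis
    using Ltilde_carrier resolvent_inverse Q s2 unfolding limit_inv_def proj_compl_def by (simp add: mat_dim_simps smult_inverse_smult_mat)
qed

lemma proj_compl_mult_residual: "proj_compl * residual = 0\<^sub>m n n"
proof -
  have "proj_compl * ((L + s2 \<cdot>\<^sub>m 1\<^sub>m n) * limit_inv) = (Ltilde n L Q + s2 \<cdot>\<^sub>m 1\<^sub>m n) * limit_inv"
    using proj_compl_carrier L limit_inv_carrier unfolding Ltilde_eq by (simp add: mat_dim_simps proj_compl_mult_limit_inv)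
  then show ?thesis
    using proj_compl_carrier L limit_inv_carrier unfolding residual_def by (simp add: mat_dim_simps shifted_Ltilde_mult_limit_inv)
qed

lemma residual_in_span: "residual = Q * (Q\<^sup>T * residual)"
proof -
  have residual: "residual \<in> carrier_mat n n"
    using L limit_inv_carrier unfolding residual_def by auto
  have "residual = Q * (Q\<^sup>T * residual) + proj_compl * residual"
    using Q residual unfolding proj_compl_def by (simp add: mat_dim_simps) (intro eq_matI; simp)
  then show ?thesis
    using Q residual by (simp add: proj_compl_mult_residual minus_zero_mat)
qed

lemma smoother_minus_limit_eq:
  assumes ker: "\<And>d. d \<in> carrier_vec n \<Longrightarrow> marginal_cov eps *\<^sub>v d = 0\<^sub>v n \<Longrightarrow> d = 0\<^sub>v n"
  shows "smoother n L V s2 eps - (Q * Q\<^sup>T + Ltilde n L Q * resolvent)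
    = (- s2) \<cdot>\<^sub>m (minv (marginal_cov eps) * (Q * (Q\<^sup>T * residual)))"
proof -
  define X where "X = minv (marginal_cov eps)"
  have X: "X \<in> carrier_mat n n" and cov_X: "marginal_cov eps * X = 1\<^sub>m n" and X_cov: "X * marginal_cov eps = 1\<^sub>m n"
    using minv_inverse[OF marginal_cov_carrier ker] unfolding X_def by auto
  have "L + (1 / eps) \<cdot>\<^sub>m (V * V\<^sup>T) = marginal_cov eps - s2 \<cdot>\<^sub>m 1\<^sub>m n"
    using L V unfolding marginal_cov_def by (intro eq_matI) auto
  then have smoother: "smoother n L V s2 eps = 1\<^sub>m n - s2 \<cdot>\<^sub>m X"
    using marginal_cov_carrier X unfolding smoother_def marginal_cov_def[symmetric] X_def[symmetric]
    by (simp add: mat_dim_simps cov_X)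
  have "Ltilde n L Q * resolvent + s2 \<cdot>\<^sub>m resolvent = 1\<^sub>m n"
    using resolvent_inverse Ltilde_carrier by (simp add: mat_dim_simps)
  then have Ltilde_H: "Ltilde n L Q * resolvent = 1\<^sub>m n - s2 \<cdot>\<^sub>m resolvent"
    using resolvent_inverse(1) Ltilde_carrier by (intro eq_minus_if_add_eq_mat[of _ _ _ n n]) auto
  have "X * residual = X - X * (marginal_cov eps * limit_inv)"
    using X L limit_inv_carrier unfolding residual_def by (simp add: mat_dim_simps marginal_cov_mult_limit_inv)
  also have "X * (marginal_cov eps * limit_inv) = limit_inv"
    by (rule mult_left_inverse_cancel[OF _ X_cov]) (use X marginal_cov_carrier limit_inv_carrier in auto)
  finally have "X * residual = X - limit_inv" .
  then show ?thesis
    using X resolvent_inverse(1) Q s2 unfolding smoother Ltilde_H residual_in_span[symmetric] X_def[symmetric] limit_inv_def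
    by (intro eq_matI) (auto simp: field_simps)
qed

lemma marginal_cov_inverse_on_span:
  obtains e0 C where "0 < e0"
    and "\<And>eps d. 0 < eps \<Longrightarrow> eps < e0 \<Longrightarrow> d \<in> carrier_vec n \<Longrightarrow> marginal_cov eps *\<^sub>v d = 0\<^sub>v n \<Longrightarrow>
      d = 0\<^sub>v n"
    and "\<And>eps u. 0 < eps \<Longrightarrow> eps < e0 \<Longrightarrow> u \<in> carrier_vec p \<Longrightarrow>
      vnorm (minv (marginal_cov eps) *\<^sub>v (Q *\<^sub>v u)) \<le> C * eps * vnorm u"
proof -
  obtain e0 C where e0: "0 < e0" and bound: "\<And>eps d u. 0 < eps \<Longrightarrow> eps < e0 \<Longrightarrow>
      d \<in> carrier_vec n \<Longrightarrow> u \<in> carrier_vec p \<Longrightarrow> marginal_cov eps *\<^sub>v d = Q *\<^sub>v u \<Longrightarrow> vnorm d \<le> C * eps * vnorm u"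
    using solution_bound_on_span by blast
  have ker: "d = 0\<^sub>v n"
    if eps: "0 < eps" "eps < e0" and d: "d \<in> carrier_vec n" and "marginal_cov eps *\<^sub>v d = 0\<^sub>v n" for eps d
  proof -
    have "Q *\<^sub>v 0\<^sub>v p = 0\<^sub>v n"
      using Q by (intro eq_vecI) auto
    then have "vnorm d \<le> 0"
      using bound[OF eps d zero_carrier_vec] that(4) by simp
    then show ?thesis
      using vnorm_nonneg[of d] vnorm_eq_0D[OF d] by linarith
  qed
  have "vnorm (minv (marginal_cov eps) *\<^sub>v (Q *\<^sub>v u)) \<le> C * eps * vnorm u"
    if eps: "0 < eps" "eps < e0" and u: "u \<in> carrier_vec p" for eps u
  proof -
    define X where "X = minv (marginal_cov eps)"
    have X: "X \<in> carrier_mat n n" and cov_X: "marginal_cov eps * X = 1\<^sub>m n"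
      using minv_inverse[OF marginal_cov_carrier ker[OF eps]] unfolding X_def by auto
    have Qu: "Q *\<^sub>v u \<in> carrier_vec n"
      using Q u by simp
    have "marginal_cov eps *\<^sub>v (X *\<^sub>v (Q *\<^sub>v u)) = (marginal_cov eps * X) *\<^sub>v (Q *\<^sub>v u)"
      by (rule assoc_mult_mat_vec[symmetric, OF marginal_cov_carrier X Qu])
    then have "marginal_cov eps *\<^sub>v (X *\<^sub>v (Q *\<^sub>v u)) = Q *\<^sub>v u"
      using Qu by (simp add: cov_X)
    then show ?thesis
      using bound[OF eps _ u] X Qu unfolding X_def[symmetric] by simp
  qed
  then show ?thesis
    using that e0 ker by blast
qed

lemma smoother_asymptotics:
  "bigO_eps n (\<lambda>eps. smoother n L V s2 eps - (Q * Q\<^sup>T + Ltilde n L Q * resolvent))"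
proof -
  obtain e0 C where e0: "0 < e0"
    and ker: "\<And>eps d. 0 < eps \<Longrightarrow> eps < e0 \<Longrightarrow> d \<in> carrier_vec n \<Longrightarrow> marginal_cov eps *\<^sub>v d = 0\<^sub>v n \<Longrightarrow>
      d = 0\<^sub>v n"
    and bound: "\<And>eps u. 0 < eps \<Longrightarrow> eps < e0 \<Longrightarrow> u \<in> carrier_vec p \<Longrightarrow>
      vnorm (minv (marginal_cov eps) *\<^sub>v (Q *\<^sub>v u)) \<le> C * eps * vnorm u"
    using marginal_cov_inverse_on_span by blast
  define N where "N = Q\<^sup>T * residual"
  have N: "N \<in> carrier_mat p n"
    using Q L limit_inv_carrier unfolding N_def residual_def by auto
  show ?thesis
    unfolding bigO_eps_def
  proof (intro allI impI bigo_at_right_0I[OF e0])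
    fix i j :: nat and eps :: real
    assume i: "i < n" and j: "j < n" and eps: "0 < eps" "eps < e0"
    define X where "X = minv (marginal_cov eps)"
    have X: "X \<in> carrier_mat n n"
      using minv_inverse[OF marginal_cov_carrier ker[OF eps]] unfolding X_def by auto
    have "smoother n L V s2 eps - (Q * Q\<^sup>T + Ltilde n L Q * resolvent) = (- s2) \<cdot>\<^sub>m (X * (Q * N))"
      unfolding X_def N_def by (rule smoother_minus_limit_eq[OF ker[OF eps]])
    then have "(smoother n L V s2 eps - (Q * Q\<^sup>T + Ltilde n L Q * resolvent)) $$ (i, j)
        = - s2 * (X *\<^sub>v (Q *\<^sub>v col N j)) $ i"
      using X Q N i j by (simp add: col_mult2[OF Q N j])
    also have "\<bar>\<dots>\<bar> \<le> s2 * (C * eps * vnorm (col N j))"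
      using abs_index_le_vnorm[of i "X *\<^sub>v (Q *\<^sub>v col N j)"] bound[OF eps, of "col N j"] X N i j s2
      unfolding X_def by (simp add: abs_mult mult_left_mono order.trans)
    finally show "\<bar>(smoother n L V s2 eps - (Q * Q\<^sup>T + Ltilde n L Q * resolvent)) $$ (i, j)\<bar>
        \<le> s2 * C * vnorm (col N j) * eps"
      by (simp add: ac_simps)
  qed
qed

end

theorem mainTheorem7:
  fixes n p :: nat and L V Q :: "real mat" and s2 :: real
  assumes "L \<in> carrier_mat n n" and "L\<^sup>T = L"
    and "p \<le> n"
    and "V \<in> carrier_mat n p" and "full_col_rank V"
    and "Q \<in> carrier_mat n p" and "Q\<^sup>T * Q = 1\<^sub>m p" and "colspace Q = colspace V"
    and "psd_mat n (Ltilde n L Q)"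
    and "s2 > 0"
  shows "bigO_eps n (\<lambda>eps. smoother n L V s2 eps
            - (Q * Q\<^sup>T + Ltilde n L Q * minv (Ltilde n L Q + s2 \<cdot>\<^sub>m 1\<^sub>m n)))
    \<and> (\<forall>r U Lam. trunc_spectral n r (Ltilde n L Q) U Lam \<longrightarrow>
         bigO_eps n (\<lambda>eps. smoother n L V s2 eps
            - (Q * Q\<^sup>T + U * Lam * minv (Lam + s2 \<cdot>\<^sub>m 1\<^sub>m r) * U\<^sup>T)))"
proof -
  interpret diffuse_prior n p L V Q s2
    by unfold_locales (use assms in auto)
  have limit: "bigO_eps n (\<lambda>eps. smoother n L V s2 eps
      - (Q * Q\<^sup>T + Ltilde n L Q * minv (Ltilde n L Q + s2 \<cdot>\<^sub>m 1\<^sub>m n)))"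
    using smoother_asymptotics unfolding resolvent_def .
  moreover have "bigO_eps n (\<lambda>eps. smoother n L V s2 eps
      - (Q * Q\<^sup>T + U * Lam * minv (Lam + s2 \<cdot>\<^sub>m 1\<^sub>m r) * U\<^sup>T))"
    if "trunc_spectral n r (Ltilde n L Q) U Lam" for r U Lam
    using limit resolvent_trunc_spectral[OF psd s2] that unfolding trunc_spectral_def by auto
  ultimately show ?thesis
    by blast
qed

end
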